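(* Let $\Delta\subset\mathbb{S}^2$ be a prime flag complex that is not special. Let $\alpha_1$ and $\alpha_2$ be two distinct induced 4-cycles of $\Delta$ with non-empty intersection. Then $\alpha_1\cap\alpha_2$ is a vertex or an edge of $\Delta$.
   Context: A flag complex is a simplicial complex in which every complete subgraph of the 1-skeleton spans a simplex. For $\Delta\subset\mathbb{S}^2$, an induced 4-cycle $\sigma$ strongly separates $\Delta$ if $\Delta$ meets both components of $\mathbb{S}^2-\sigma$. $\Delta$ is prime if (1) it is connected with no separating vertex and no separating edge; (2) it is not a 4-cycle but contains an induced 4-cycle; (3) it has no strongly separating induced 4-cycle. $\Delta$ is special if it is the suspension (join with two non-adjacent vertices) of a graph with 3 vertices that is not a triangle. *)

theory Defs
  imports "HOL-Analysis.Analysis"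
begin

definition simplicial_complex :: "'v set set \<Rightarrow> bool" where
  "simplicial_complex K \<longleftrightarrow> finite K \<and> (\<forall>s\<in>K. finite s \<and> s \<noteq> {}) \<and>
     (\<forall>s\<in>K. \<forall>t. t \<subseteq> s \<and> t \<noteq> {} \<longrightarrow> t \<in> K)"

definition verts :: "'v set set \<Rightarrow> 'v set" where
  "verts K = \<Union>K"

definition adj :: "'v set set \<Rightarrow> 'v \<Rightarrow> 'v \<Rightarrow> bool" where
  "adj K u w \<longleftrightarrow> u \<noteq> w \<and> {u, w} \<in> K"

definition flag_complex :: "'v set set \<Rightarrow> bool" where
  "flag_complex K \<longleftrightarrow> simplicial_complex K \<and>
     (\<forall>S. finite S \<and> S \<noteq> {} \<and> S \<subseteq> verts K \<and> (\<forall>u\<in>S. \<forall>w\<in>S. u \<noteq> w \<longrightarrow> adj K u w)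
          \<longrightarrow> S \<in> K)"

definition full_sub :: "'v set set \<Rightarrow> 'v set \<Rightarrow> 'v set set" where
  "full_sub K S = {s \<in> K. s \<subseteq> S}"

text \<open>Geometric realization (barycentric coordinates, in the product topology).\<close>
definition geom :: "'v set set \<Rightarrow> ('v \<Rightarrow> real) set" where
  "geom K = {x. (\<forall>v. 0 \<le> x v) \<and> {v. x v \<noteq> 0} \<in> K \<and> sum x {v. x v \<noteq> 0} = 1}"

text \<open>An embedding of the complex into the 2-sphere; its image is \<open>\<Delta>\<close>.\<close>
definition sphere_embedding :: "'v set set \<Rightarrow> (('v \<Rightarrow> real) \<Rightarrow> real^3) \<Rightarrow> bool" where
  "sphere_embedding K h \<longleftrightarrow> continuous_on (geom K) h \<and> inj_on h (geom K) \<and>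
     h ` geom K \<subseteq> sphere 0 1"

definition induced_4cycle :: "'v set set \<Rightarrow> 'v set \<Rightarrow> bool" where
  "induced_4cycle K S \<longleftrightarrow> S \<subseteq> verts K \<and> (\<exists>a b c d. S = {a, b, c, d} \<and>
     a \<noteq> b \<and> a \<noteq> c \<and> a \<noteq> d \<and> b \<noteq> c \<and> b \<noteq> d \<and> c \<noteq> d \<and>
     adj K a b \<and> adj K b c \<and> adj K c d \<and> adj K d a \<and> \<not> adj K a c \<and> \<not> adj K b d)"

text \<open>\<open>\<sigma>\<close> strongly separates \<open>\<Delta>\<close>: \<open>\<Delta>\<close> meets both (all) components of \<open>S\<^sup>2 - \<sigma>\<close>.\<close>
definition strongly_separates :: "'v set set \<Rightarrow> (('v \<Rightarrow> real) \<Rightarrow> real^3) \<Rightarrow> 'v set \<Rightarrow> bool" where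
  "strongly_separates K h S \<longleftrightarrow> induced_4cycle K S \<and>
     (\<forall>C\<in>components (sphere 0 1 - h ` geom (full_sub K S)). h ` geom K \<inter> C \<noteq> {})"

definition vertex_point :: "'v \<Rightarrow> ('v \<Rightarrow> real)" where
  "vertex_point v = (\<lambda>u. if u = v then 1 else 0)"

definition prime_complex :: "'v set set \<Rightarrow> (('v \<Rightarrow> real) \<Rightarrow> real^3) \<Rightarrow> bool" where
  "prime_complex K h \<longleftrightarrow>
     connected (h ` geom K) \<and>
     (\<forall>v\<in>verts K. connected (h ` geom K - {h (vertex_point v)})) \<and>
     (\<forall>u w. adj K u w \<longrightarrow> connected (h ` geom K - h ` geom (full_sub K {u, w}))) \<and>
     \<not> induced_4cycle K (verts K) \<and>
     (\<exists>S. induced_4cycle K S) \<and>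
     (\<forall>S. \<not> strongly_separates K h S)"

text \<open>Special: suspension of a graph on 3 vertices which is not a triangle.\<close>
definition special_complex :: "'v set set \<Rightarrow> bool" where
  "special_complex K \<longleftrightarrow> (\<exists>n s A. n \<noteq> s \<and> n \<notin> A \<and> s \<notin> A \<and> card A = 3 \<and>
     verts K = A \<union> {n, s} \<and> \<not> adj K n s \<and> (\<forall>x\<in>A. adj K n x \<and> adj K s x) \<and>
     \<not> (\<forall>x\<in>A. \<forall>y\<in>A. x \<noteq> y \<longrightarrow> adj K x y))"

end

(*
  If S1 and S2 shared two non-adjacent vertices a and c, these would be opposite in both 4-cycles,
  so a and c would have three common neighbours p, q, r with p and q non-adjacent. Puncture the
  sphere at a point off the complex and work in the plane. The induced 4-cycle a p c q does not
  strongly separate, so one side B of its Jordan curve misses the complex. Any further vertex f is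
  joined to B off the curve a p c r (through q, which lies on the frontier of B) and off a q c r
  (through p); these two curves meet in the arc c r a, so by Janiszewski's theorem f is joined to B
  off their union, which contains a p c q. Then f lies in B, which is impossible. Hence the
  complex is the suspension of {p, q, r}, i.e. special. So S1 and S2 meet in a clique of an
  induced 4-cycle, which is a vertex or an edge.
*)

theory Submission
  imports Defs
begin

section \<open>Simplices of the geometric realization\<close>

definition closed_simplex :: "'v set \<Rightarrow> ('v \<Rightarrow> real) set" where
  "closed_simplex A = {x. (\<forall>v. 0 \<le> x v) \<and> (\<forall>v. v \<notin> A \<longrightarrow> x v = 0) \<and> sum x A = 1}"

lemma sum_eq_sum_support:
  assumes "finite A" "{v. x v \<noteq> 0} \<subseteq> A"
  shows "sum x {v. x v \<noteq> (0::real)} = sum x A"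
  using assms by (intro sum.mono_neutral_left) auto

lemma closed_simplex_Int:
  assumes "finite A" "finite B"
  shows "closed_simplex A \<inter> closed_simplex B = closed_simplex (A \<inter> B)"
proof (intro equalityI subsetI)
  fix x assume x: "x \<in> closed_simplex A \<inter> closed_simplex B"
  have "sum x (A \<inter> B) = sum x A"
    using x assms(1) by (intro sum.mono_neutral_left) (auto simp: closed_simplex_def)
  then show "x \<in> closed_simplex (A \<inter> B)" using x by (auto simp: closed_simplex_def)
next
  fix x assume x: "x \<in> closed_simplex (A \<inter> B)"
  have "sum x (A \<inter> B) = sum x A" "sum x (A \<inter> B) = sum x B"
    by (rule sum.mono_neutral_left; use x assms in \<open>auto simp: closed_simplex_def\<close>)+
  then show "x \<in> closed_simplex A \<inter> closed_simplex B" using x by (auto simp: closed_simplex_def)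
qed

lemma closed_simplex_mono:
  assumes "finite B" "A \<subseteq> B"
  shows "closed_simplex A \<subseteq> closed_simplex B"
  using closed_simplex_Int[of A B] assms by (metis Int_absorb2 finite_subset inf.cobounded2)

lemma closed_simplex_empty [simp]: "closed_simplex {} = {}"
  by (simp add: closed_simplex_def)

lemma closed_simplex_singleton [simp]: "closed_simplex {v} = {vertex_point v}"
  by (auto simp: closed_simplex_def vertex_point_def)

lemma vertex_point_in_closed_simplex_iff [simp]:
  "finite A \<Longrightarrow> vertex_point v \<in> closed_simplex A \<longleftrightarrow> v \<in> A"
  using closed_simplex_mono[of A "{v}"] by (auto simp: closed_simplex_def vertex_point_def)

lemma simplicial_complex_closed:
  "simplicial_complex K \<Longrightarrow> s \<in> K \<Longrightarrow> t \<subseteq> s \<Longrightarrow> t \<noteq> {} \<Longrightarrow> t \<in> K"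
  unfolding simplicial_complex_def by blast

lemma simplicial_complex_full_sub: "simplicial_complex K \<Longrightarrow> simplicial_complex (full_sub K S)"
  by (auto simp: simplicial_complex_def full_sub_def)

lemma geom_eq_Union_closed_simplex:
  assumes "simplicial_complex K"
  shows "geom K = (\<Union>s\<in>K. closed_simplex s)"
proof (intro equalityI subsetI)
  fix x assume x: "x \<in> geom K"
  then have "{v. x v \<noteq> 0} \<in> K" "x \<in> closed_simplex {v. x v \<noteq> 0}"
    by (auto simp: geom_def closed_simplex_def)
  then show "x \<in> (\<Union>s\<in>K. closed_simplex s)" by blast
next
  fix x assume "x \<in> (\<Union>s\<in>K. closed_simplex s)"
  then obtain s where s: "s \<in> K" "x \<in> closed_simplex s" by blast
  have fin: "finite s" using assms s(1) by (simp add: simplicial_complex_def)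
  have supp: "{v. x v \<noteq> 0} \<subseteq> s" using s(2) by (auto simp: closed_simplex_def)
  have sum: "sum x {v. x v \<noteq> 0} = 1"
    using sum_eq_sum_support[OF fin supp] s(2) by (simp add: closed_simplex_def)
  then have "{v. x v \<noteq> 0} \<noteq> {}" by (metis sum.empty zero_neq_one)
  then have "{v. x v \<noteq> 0} \<in> K" using simplicial_complex_closed[OF assms s(1) supp] by blast
  then show "x \<in> geom K" using s(2) sum by (simp add: geom_def closed_simplex_def)
qed

lemma closed_simplex_subset_geom:
  "simplicial_complex K \<Longrightarrow> s \<in> K \<Longrightarrow> closed_simplex s \<subseteq> geom K"
  by (auto simp: geom_eq_Union_closed_simplex)

lemma vertex_point_in_geom:
  assumes "simplicial_complex K" "v \<in> verts K"
  shows "vertex_point v \<in> geom K"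
proof -
  obtain s where "s \<in> K" "v \<in> s" using assms(2) by (auto simp: verts_def)
  then have "{v} \<in> K" using simplicial_complex_closed[OF assms(1)] by blast
  then show ?thesis using closed_simplex_subset_geom[OF assms(1)] by fastforce
qed

definition edge_path :: "'v \<Rightarrow> 'v \<Rightarrow> real \<Rightarrow> ('v \<Rightarrow> real)" where
  "edge_path u w t = (\<lambda>v. (1 - t) * vertex_point u v + t * vertex_point w v)"

lemma path_edge_path: "path (edge_path u w)"
  unfolding path_def edge_path_def
  by (intro continuous_on_coordinatewise_then_product continuous_intros)

lemma arc_edge_path: "u \<noteq> w \<Longrightarrow> arc (edge_path u w)"
  unfolding arc_def by (auto simp: path_edge_path inj_on_def edge_path_def vertex_point_def fun_eq_iff)

lemma pathstart_edge_path [simp]: "pathstart (edge_path u w) = vertex_point u"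
  and pathfinish_edge_path [simp]: "pathfinish (edge_path u w) = vertex_point w"
  by (simp_all add: pathstart_def pathfinish_def edge_path_def vertex_point_def)

lemma path_image_edge_path: "path_image (edge_path u w) = closed_simplex {u, w}"
proof (intro equalityI subsetI)
  fix x assume "x \<in> path_image (edge_path u w)"
  then show "x \<in> closed_simplex {u, w}"
    by (cases "u = w") (auto simp: path_image_def edge_path_def closed_simplex_def vertex_point_def)
next
  fix x assume x: "x \<in> closed_simplex {u, w}"
  show "x \<in> path_image (edge_path u w)"
  proof (cases "u = w")
    case True
    have "edge_path u w 0 = x" using x True by (auto simp: edge_path_def fun_eq_iff)
    then show ?thesis by (auto simp: path_image_def)
  next
    case False
    then have "x u + x w = 1" "0 \<le> x u" "0 \<le> x w" using x by (auto simp: closed_simplex_def)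
    moreover have "x = edge_path u w (x w)"
      using x \<open>x u + x w = 1\<close> by (auto simp: fun_eq_iff edge_path_def closed_simplex_def vertex_point_def)
    ultimately show ?thesis by (auto simp: path_image_def)
  qed
qed

lemma connected_closed_simplex_edge: "connected (closed_simplex {u, w})"
  by (metis connected_path_image path_edge_path path_image_edge_path)

definition square_set :: "'v \<Rightarrow> 'v \<Rightarrow> 'v \<Rightarrow> 'v \<Rightarrow> ('v \<Rightarrow> real) set" where
  "square_set a b c d =
     closed_simplex {a, b} \<union> closed_simplex {b, c} \<union> closed_simplex {c, d} \<union> closed_simplex {d, a}"

definition square_loop :: "'v \<Rightarrow> 'v \<Rightarrow> 'v \<Rightarrow> 'v \<Rightarrow> real \<Rightarrow> ('v \<Rightarrow> real)" where
  "square_loop a b c d = edge_path a b +++ (edge_path b c +++ (edge_path c d +++ edge_path d a))"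

lemma path_image_square_loop:
  "path_image (square_loop a b c d) = square_set a b c d"
  by (simp add: square_loop_def square_set_def path_image_join path_image_edge_path Un_assoc)

lemma pathfinish_square_loop: "pathfinish (square_loop a b c d) = pathstart (square_loop a b c d)"
  by (simp add: square_loop_def)

lemma simple_path_square_loop:
  assumes "distinct [a, b, c, d]"
  shows "simple_path (square_loop a b c d)"
proof -
  have arc_cda: "arc (edge_path c d +++ edge_path d a)"
    using assms by (intro arc_join) (auto simp: arc_edge_path path_image_edge_path closed_simplex_Int Int_insert_left)
  have arc_bcda: "arc (edge_path b c +++ (edge_path c d +++ edge_path d a))"
    using assms arc_cda
    by (intro arc_join) (auto simp: arc_edge_path path_image_join path_image_edge_path Int_Un_distrib closed_simplex_Int Int_insert_left)
  show ?thesis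
    unfolding square_loop_def using assms arc_bcda
    by (intro simple_path_join_loop)
      (auto simp: arc_edge_path path_image_join path_image_edge_path Int_Un_distrib closed_simplex_Int Int_insert_left)
qed

lemma compact_square_set: "distinct [a, b, c, d] \<Longrightarrow> compact (square_set a b c d)"
  by (metis compact_path_image path_image_square_loop simple_path_imp_path simple_path_square_loop)

lemma square_set_subset_geom:
  assumes "simplicial_complex K" "adj K a b" "adj K b c" "adj K c d" "adj K d a"
  shows "square_set a b c d \<subseteq> geom K"
  using assms closed_simplex_subset_geom[OF assms(1)] by (auto simp: square_set_def adj_def)

lemma vertex_point_in_square_set_iff:
  "vertex_point v \<in> square_set a b c d \<longleftrightarrow> v \<in> {a, b, c, d}"
  by (auto simp: square_set_def)

lemma square_set_Int_square_set:
  assumes "distinct [a, p, q, c, r]"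
  shows "square_set a p c r \<inter> square_set a q c r = closed_simplex {c, r} \<union> closed_simplex {r, a}"
  using assms
  by (auto simp: square_set_def Int_Un_distrib Int_Un_distrib2 closed_simplex_Int Int_insert_left)

lemma square_set_subset_Un:
  "square_set a p c q \<subseteq> square_set a p c r \<union> square_set a q c r"
  by (auto simp: square_set_def insert_commute)

lemma geom_full_sub_induced_square:
  assumes sc: "simplicial_complex K"
    and "adj K a b" "adj K b c" "adj K c d" "adj K d a" "\<not> adj K a c" "\<not> adj K b d"
    and "distinct [a, b, c, d]"
  shows "geom (full_sub K {a, b, c, d}) = square_set a b c d"
proof -
  have in_edge: "s \<subseteq> {a, b} \<or> s \<subseteq> {b, c} \<or> s \<subseteq> {c, d} \<or> s \<subseteq> {d, a}"
    if s: "s \<in> K" "s \<subseteq> {a, b, c, d}" for s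
  proof -
    have "\<not> {a, c} \<subseteq> s" "\<not> {b, d} \<subseteq> s"
      using simplicial_complex_closed[OF sc s(1)] assms(6-8) by (auto simp: adj_def)
    then show ?thesis using s(2) by blast
  qed
  have "closed_simplex s \<subseteq> square_set a b c d" if "s \<in> full_sub K {a, b, c, d}" for s
    using in_edge[of s] that closed_simplex_mono[of "{a, b}" s] closed_simplex_mono[of "{b, c}" s]
      closed_simplex_mono[of "{c, d}" s] closed_simplex_mono[of "{d, a}" s]
    unfolding full_sub_def square_set_def by auto
  then have "(\<Union>s\<in>full_sub K {a, b, c, d}. closed_simplex s) \<subseteq> square_set a b c d" by blast
  moreover have "square_set a b c d \<subseteq> (\<Union>s\<in>full_sub K {a, b, c, d}. closed_simplex s)"
    using assms(2-5) by (auto simp: square_set_def full_sub_def adj_def)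
  ultimately show ?thesis
    unfolding geom_eq_Union_closed_simplex[OF simplicial_complex_full_sub[OF sc]] by blast
qed

(* Affine map from the standard triangle with vertices 0, 1, i onto the closed 2-simplex. *)
definition triangle_param :: "'v \<Rightarrow> 'v \<Rightarrow> 'v \<Rightarrow> complex \<Rightarrow> ('v \<Rightarrow> real)" where
  "triangle_param u w y z =
     (\<lambda>v. (1 - Re z - Im z) * vertex_point u v + Re z * vertex_point w v + Im z * vertex_point y v)"

lemma continuous_on_triangle_param: "continuous_on S (triangle_param u w y)"
  unfolding triangle_param_def by (intro continuous_on_coordinatewise_then_product continuous_intros)

lemma inj_triangle_param: "distinct [u, w, y] \<Longrightarrow> inj (triangle_param u w y)"
  by (rule injI) (auto simp: triangle_param_def vertex_point_def complex_eq_iff fun_eq_iff dest: spec[of _ w] spec[of _ y])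

lemma triangle_param_image:
  assumes "distinct [u, w, y]"
  shows "triangle_param u w y ` (convex hull {0, 1, \<i>}) = closed_simplex {u, w, y}"
proof (intro equalityI subsetI)
  fix x assume "x \<in> triangle_param u w y ` (convex hull {0, 1, \<i>})"
  then obtain s t q where "0 \<le> s" "0 \<le> t" "0 \<le> q" "s + t + q = 1"
    and "x = triangle_param u w y (s *\<^sub>R 0 + t *\<^sub>R 1 + q *\<^sub>R \<i>)"
    unfolding convex_hull_3 by blast
  then show "x \<in> closed_simplex {u, w, y}"
    using assms by (auto simp: triangle_param_def closed_simplex_def vertex_point_def)
next
  fix x assume x: "x \<in> closed_simplex {u, w, y}"
  then have sum: "x u + x w + x y = 1" using assms by (simp add: closed_simplex_def add.assoc)
  then have "x = triangle_param u w y (Complex (x w) (x y))"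
    using x assms by (auto simp: fun_eq_iff triangle_param_def closed_simplex_def vertex_point_def)
  moreover have "Complex (x w) (x y) = x u *\<^sub>R 0 + x w *\<^sub>R 1 + x y *\<^sub>R \<i>"
    by (simp add: complex_eq_iff)
  then have "Complex (x w) (x y) \<in> convex hull {0, 1, \<i>}"
    unfolding convex_hull_3 using x sum by (auto simp: closed_simplex_def)
  ultimately show "x \<in> triangle_param u w y ` (convex hull {0, 1, \<i>})" by blast
qed

lemma compact_closed_simplex_triangle:
  assumes "distinct [u, w, y]"
  shows "compact (closed_simplex {u, w, y})"
proof -
  have "compact (triangle_param u w y ` (convex hull {0, 1, \<i>}))"
    by (intro compact_continuous_image continuous_on_triangle_param compact_convex_hull) simp
  then show ?thesis by (simp only: triangle_param_image[OF assms])
qed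

section \<open>Induced 4-cycles\<close>

lemma adj_sym: "adj K u w \<longleftrightarrow> adj K w u"
  unfolding adj_def by (auto simp: insert_commute)

lemma adj_imp_verts: "adj K u w \<Longrightarrow> u \<in> verts K \<and> w \<in> verts K"
  unfolding adj_def verts_def by auto

lemma flag_complex_triangle:
  assumes "flag_complex K" "adj K x y" "adj K y z" "adj K x z"
  shows "{x, y, z} \<in> K"
proof -
  have "{x, y, z} \<subseteq> verts K" using assms(2-4) adj_imp_verts by fastforce
  moreover have "\<forall>u\<in>{x, y, z}. \<forall>w\<in>{x, y, z}. u \<noteq> w \<longrightarrow> adj K u w"
    using assms(2-4) unfolding adj_def by (auto simp: insert_commute)
  moreover have "\<And>S. finite S \<Longrightarrow> S \<noteq> {} \<Longrightarrow> S \<subseteq> verts K \<Longrightarrow>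
      (\<forall>u\<in>S. \<forall>w\<in>S. u \<noteq> w \<longrightarrow> adj K u w) \<Longrightarrow> S \<in> K"
    using assms(1) unfolding flag_complex_def by simp
  ultimately show ?thesis by simp
qed

lemma induced_4cycle_opposite:
  assumes "induced_4cycle K S" "u \<in> S" "w \<in> S" "u \<noteq> w" "\<not> adj K u w"
  obtains b d where "S = {u, b, w, d}" "distinct [u, b, w, d]"
    "adj K u b" "adj K b w" "adj K u d" "adj K d w" "\<not> adj K b d"
proof -
  obtain a b c d where S: "S = {a, b, c, d}" "distinct [a, b, c, d]"
    "adj K a b" "adj K b c" "adj K c d" "adj K d a" "\<not> adj K a c" "\<not> adj K b d"
    using assms(1) unfolding induced_4cycle_def by auto
  have sym: "adj K b a" "adj K c b" "adj K d c" "adj K a d" "\<not> adj K c a" "\<not> adj K d b"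
    using S(3-8) adj_sym by metis+
  have "(u = a \<and> w = c) \<or> (u = c \<and> w = a) \<or> (u = b \<and> w = d) \<or> (u = d \<and> w = b)"
    using assms(2-5) S sym by auto
  then show ?thesis
  proof (elim disjE conjE)
    assume uw: "u = a" "w = c"
    show ?thesis by (rule that[of b d]) (use S sym uw in auto)
  next
    assume uw: "u = c" "w = a"
    show ?thesis by (rule that[of b d]) (use S sym uw in auto)
  next
    assume uw: "u = b" "w = d"
    show ?thesis by (rule that[of c a]) (use S sym uw in auto)
  next
    assume uw: "u = d" "w = b"
    show ?thesis by (rule that[of a c]) (use S sym uw in auto)
  qed
qed

lemma induced_4cycle_no_triangle:
  assumes "induced_4cycle K S" "{x, y, z} \<subseteq> S" "distinct [x, y, z]"
    and "adj K x y" "adj K y z" "adj K x z"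
  shows False
proof -
  obtain a b c d where S: "S = {a, b, c, d}" "\<not> adj K a c" "\<not> adj K b d"
    using assms(1) unfolding induced_4cycle_def by blast
  have "\<not> adj K c a" "\<not> adj K d b" using S(2,3) adj_sym by metis+
  then show False using assms(2-6) S by auto
qed

lemma full_sub_singleton:
  assumes "simplicial_complex K" "v \<in> verts K"
  shows "full_sub K {v} = {{v}}"
proof -
  obtain s where "s \<in> K" "v \<in> s" using assms(2) by (auto simp: verts_def)
  then have "{v} \<in> K" using simplicial_complex_closed[OF assms(1)] by blast
  moreover have "s = {v}" if "s \<in> K" "s \<subseteq> {v}" for s
    using assms(1) that unfolding simplicial_complex_def by blast
  ultimately show ?thesis unfolding full_sub_def by blast
qed

lemma full_sub_edge:
  assumes "simplicial_complex K" "adj K v w"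
  shows "full_sub K {v, w} = {{v}, {w}, {v, w}}"
proof -
  have e: "{v, w} \<in> K" using assms(2) unfolding adj_def by simp
  then have "{v} \<in> K" "{w} \<in> K" using simplicial_complex_closed[OF assms(1) e] by auto
  moreover have "s = {v} \<or> s = {w} \<or> s = {v, w}" if "s \<in> K" "s \<subseteq> {v, w}" for s
    using assms(1) that unfolding simplicial_complex_def by blast
  ultimately show ?thesis using e unfolding full_sub_def by blast
qed

lemma induced_4cycleI:
  assumes "adj K a b" "adj K b c" "adj K c d" "adj K d a" "\<not> adj K a c" "\<not> adj K b d"
    and "distinct [a, b, c, d]"
  shows "induced_4cycle K {a, b, c, d}"
proof -
  have "{a, b, c, d} \<subseteq> verts K" using adj_imp_verts[OF assms(1)] adj_imp_verts[OF assms(3)] by blast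
  then show ?thesis
    unfolding induced_4cycle_def using assms by (intro conjI exI[of _ a] exI[of _ b] exI[of _ c] exI[of _ d]) auto
qed

section \<open>The complex in a plane chart of the sphere\<close>

lemma connected_component_closure_point:
  assumes "connected B" "y \<in> B" "z \<in> closure B" "insert z B \<subseteq> S"
  shows "connected_component S y z"
proof -
  have "connected (insert z B)"
  proof (rule connected_intermediate_closure[OF assms(1)])
    show "insert z B \<subseteq> closure B" using assms(3) closure_subset by blast
  qed blast
  then show ?thesis
    unfolding connected_component_def by (intro exI[of _ "insert z B"]) (use assms(2,4) in simp)
qed

lemma component_eq_connected_component_set:
  "C \<in> components S \<Longrightarrow> x \<in> C \<Longrightarrow> C = connected_component_set S x"
  by (metis components_iff connected_component_eq)

lemma sphere_component_other_point:
  fixes T :: "(real^3) set"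
  assumes "compact T" "W \<in> components (sphere 0 1 - T)"
  obtains w where "w \<in> W" "w \<noteq> P"
proof -
  \<comment> \<open>Components of an open subset of the sphere are open, and the sphere has no isolated points.\<close>
  have "W \<noteq> {P}"
  proof
    assume W: "W = {P}"
    have open_diff: "openin (top_of_set (sphere 0 1)) (sphere 0 1 - T)"
      unfolding Diff_eq using assms(1) by (intro openin_open_Int) (simp add: compact_imp_closed open_Compl)
    have "openin (top_of_set (sphere 0 1 - T)) W"
      using openin_components_locally_connected
        [OF locally_open_subset[OF locally_connected_sphere open_diff] assms(2)] .
    then have "openin (top_of_set (sphere (0::real^3) 1)) {P}"
      using openin_trans[OF _ open_diff] W by blast
    moreover have "P \<in> sphere 0 1" using W in_components_subset[OF assms(2)] by blast
    then have "closedin (top_of_set (sphere (0::real^3) 1)) {P}"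
      by (intro closed_subset) auto
    moreover have "connected (sphere (0::real^3) 1)" by (rule connected_sphere) simp
    ultimately have "sphere (0::real^3) 1 = {P}"
      unfolding connected_clopen by blast
    moreover have "- P \<in> sphere (0::real^3) 1" using \<open>P \<in> sphere 0 1\<close> by simp
    ultimately have "- P = P" by blast
    then have "P + P = 0" by (simp add: neg_eq_iff_add_eq_0)
    then have "(2::real) *\<^sub>R P = 0" by (simp add: scaleR_2)
    then have "P = 0" by simp
    then show False using \<open>P \<in> sphere 0 1\<close> by simp
  qed
  then show ?thesis using in_components_nonempty[OF assms(2)] that by blast
qed

(* A chart of the sphere punctured at a point P missed by the complex: through it the complex
   lies in the plane, where the Jordan curve theorem and Janiszewski's theorem are available. *)
locale plane_chart =
  fixes K :: "'v set set" and h :: "('v \<Rightarrow> real) \<Rightarrow> real^3" and P :: "real^3"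
    and \<phi> :: "real^3 \<Rightarrow> complex" and \<psi> :: "complex \<Rightarrow> real^3"
  assumes flag: "flag_complex K" and emb: "sphere_embedding K h"
    and no_strong_sep: "\<And>S. \<not> strongly_separates K h S"
    and P: "P \<in> sphere 0 1" "P \<notin> h ` geom K"
    and chart: "homeomorphism (sphere 0 1 - {P}) UNIV \<phi> \<psi>"
begin

definition planar :: "('v \<Rightarrow> real) \<Rightarrow> complex" where
  "planar = \<phi> \<circ> h"

definition Delta :: "complex set" where
  "Delta = planar ` geom K"

lemma simplicial: "simplicial_complex K"
  using flag unfolding flag_complex_def by simp

lemma h_image_subset: "h ` geom K \<subseteq> sphere 0 1 - {P}"
  using emb P unfolding sphere_embedding_def by auto

lemma chart_inverse_planar: "x \<in> geom K \<Longrightarrow> \<psi> (planar x) = h x"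
proof -
  assume "x \<in> geom K"
  then have "h x \<in> sphere 0 1 - {P}" using h_image_subset by blast
  then show ?thesis by (simp add: planar_def homeomorphism_apply1[OF chart])
qed

lemma continuous_on_planar: "continuous_on (geom K) planar"
proof -
  have "continuous_on (geom K) h" using emb unfolding sphere_embedding_def by simp
  moreover have "continuous_on (h ` geom K) \<phi>"
    using continuous_on_subset[OF homeomorphism_cont1[OF chart] h_image_subset] .
  ultimately show ?thesis unfolding planar_def by (rule continuous_on_compose)
qed

lemma inj_on_planar: "inj_on planar (geom K)"
proof -
  have "inj_on \<phi> (h ` geom K)"
  proof (rule inj_onI)
    fix x y assume xy: "x \<in> h ` geom K" "y \<in> h ` geom K" "\<phi> x = \<phi> y"
    have "x \<in> sphere 0 1 - {P}" "y \<in> sphere 0 1 - {P}" using xy(1,2) h_image_subset by blast+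
    then have "\<psi> (\<phi> x) = x" "\<psi> (\<phi> y) = y" by (simp_all add: homeomorphism_apply1[OF chart])
    then show "x = y" using xy(3) by metis
  qed
  moreover have "inj_on h (geom K)" using emb unfolding sphere_embedding_def by simp
  ultimately show ?thesis unfolding planar_def by (simp add: comp_inj_on)
qed

lemma planar_notin_image: "x \<in> geom K \<Longrightarrow> A \<subseteq> geom K \<Longrightarrow> x \<notin> A \<Longrightarrow> planar x \<notin> planar ` A"
  by (simp add: inj_on_image_mem_iff[OF inj_on_planar])

lemma compact_planar_image: "compact A \<Longrightarrow> A \<subseteq> geom K \<Longrightarrow> compact (planar ` A)"
  by (rule compact_continuous_image[OF continuous_on_subset[OF continuous_on_planar]])

lemma connected_planar_image: "connected A \<Longrightarrow> A \<subseteq> geom K \<Longrightarrow> connected (planar ` A)"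
  by (rule connected_continuous_image[OF continuous_on_subset[OF continuous_on_planar]])

lemma planar_vertex_in_Delta: "v \<in> verts K \<Longrightarrow> planar (vertex_point v) \<in> Delta"
  unfolding Delta_def using vertex_point_in_geom[OF simplicial] by blast

lemma Jordan_planar_square:
  assumes "adj K a b" "adj K b c" "adj K c d" "adj K d a" "distinct [a, b, c, d]"
  defines "J \<equiv> planar ` square_set a b c d"
  shows "inside J \<noteq> {}" "outside J \<noteq> {}" "connected (inside J)" "connected (outside J)"
    and "inside J \<union> outside J = - J" "frontier (inside J) = J" "frontier (outside J) = J"
proof -
  have sq: "square_set a b c d \<subseteq> geom K"
    using square_set_subset_geom[OF simplicial assms(1-4)] .
  have "simple_path (planar \<circ> square_loop a b c d)"
    using sq continuous_on_planar inj_on_planar simple_path_square_loop[OF assms(5)]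
    by (intro simple_path_continuous_image)
      (auto simp: path_image_square_loop intro: continuous_on_subset inj_on_subset)
  moreover have "pathfinish (planar \<circ> square_loop a b c d) = pathstart (planar \<circ> square_loop a b c d)"
    by (simp add: pathfinish_compose pathstart_compose pathfinish_square_loop)
  moreover have "path_image (planar \<circ> square_loop a b c d) = J"
    by (simp add: path_image_compose path_image_square_loop J_def)
  ultimately show "inside J \<noteq> {}" "outside J \<noteq> {}" "connected (inside J)" "connected (outside J)"
    and "inside J \<union> outside J = - J" "frontier (inside J) = J" "frontier (outside J) = J"
    using Jordan_inside_outside[of "planar \<circ> square_loop a b c d"] by simp_all
qed

lemma planar_Janiszewski:
  assumes "A \<subseteq> geom K" "B \<subseteq> geom K" "compact A" "compact B" "connected (A \<inter> B)"
    and "connected_component (- planar ` A) y z" "connected_component (- planar ` B) y z"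
  shows "connected_component (- planar ` (A \<union> B)) y z"
proof -
  have "planar ` A \<inter> planar ` B = planar ` (A \<inter> B)"
    using inj_on_image_Int[OF inj_on_planar assms(1,2)] by simp
  then have "connected (planar ` A \<inter> planar ` B)"
    using connected_planar_image[OF assms(5)] assms(1) by auto
  then show ?thesis
    using Janiszewski[OF compact_planar_image[OF assms(3,1)]
        compact_imp_closed[OF compact_planar_image[OF assms(4,2)]] _ assms(6,7)]
    by (simp add: image_Un)
qed

lemma connected_complement_planar_triangle:
  assumes "{u, w, y} \<in> K" "distinct [u, w, y]"
  shows "connected (- planar ` closed_simplex {u, w, y})"
proof -
  let ?H = "convex hull {0, 1, \<i>::complex}"
  have sub: "closed_simplex {u, w, y} \<subseteq> geom K"
    using closed_simplex_subset_geom[OF simplicial assms(1)] .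
  have "?H homeomorphic planar ` closed_simplex {u, w, y}"
  proof (rule homeomorphic_compact[where f = "planar \<circ> triangle_param u w y"])
    show "continuous_on ?H (planar \<circ> triangle_param u w y)"
      using continuous_on_subset[OF continuous_on_planar sub]
      by (intro continuous_on_compose continuous_on_triangle_param)
        (simp only: triangle_param_image[OF assms(2)])
    have "inj_on (triangle_param u w y) ?H"
      using inj_triangle_param[OF assms(2)] by (rule inj_on_subset) simp
    moreover have "inj_on planar (triangle_param u w y ` ?H)"
      using inj_on_subset[OF inj_on_planar sub] by (simp only: triangle_param_image[OF assms(2)])
    ultimately show "inj_on (planar \<circ> triangle_param u w y) ?H" by (rule comp_inj_on)
    show "(planar \<circ> triangle_param u w y) ` ?H = planar ` closed_simplex {u, w, y}"
      by (simp only: image_comp[symmetric] triangle_param_image[OF assms(2)])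
  qed (simp add: compact_convex_hull)
  then have "planar ` closed_simplex {u, w, y} homeomorphic ?H" by (metis homeomorphic_sym)
  then show ?thesis
    by (rule connected_complement_homeomorphic_convex_compact)
      (simp_all add: convex_convex_hull compact_convex_hull)
qed

lemma component_lift_of_connected_set:
  assumes "A \<subseteq> geom K" "W \<in> components (sphere 0 1 - h ` A)" "w \<in> W" "w \<noteq> P"
    and "connected U" "U \<inter> planar ` A = {}" "\<phi> w \<in> U"
  shows "\<psi> ` U \<subseteq> W"
proof -
  have W: "W = connected_component_set (sphere 0 1 - h ` A) w"
    using component_eq_connected_component_set[OF assms(2,3)] .
  have "\<psi> ` U \<subseteq> sphere 0 1 - h ` A"
  proof
    fix y assume "y \<in> \<psi> ` U"
    then obtain z where z: "z \<in> U" "y = \<psi> z" by blast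
    have "y \<notin> h ` A"
    proof
      assume "y \<in> h ` A"
      then obtain x where x: "x \<in> A" "y = h x" by blast
      then have "h x = \<psi> z" using z(2) by simp
      then have "planar x = z" using homeomorphism_apply2[OF chart, of z] by (simp add: planar_def)
      then show False using x(1) z(1) assms(6) by blast
    qed
    then show "y \<in> sphere 0 1 - h ` A" using z(2) homeomorphism_image2[OF chart] by blast
  qed
  moreover have "connected (\<psi> ` U)"
    using connected_continuous_image[OF continuous_on_subset[OF homeomorphism_cont2[OF chart]] assms(5)]
    by simp
  moreover have "w \<in> sphere 0 1 - {P}"
    using assms(3,4) in_components_subset[OF assms(2)] by blast
  then have "w \<in> \<psi> ` U" using assms(7) homeomorphism_apply1[OF chart] by (metis image_eqI)
  ultimately show ?thesis unfolding W by (intro connected_component_maximal)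
qed

lemma planar_point_of_avoiding_component:
  assumes "A \<subseteq> geom K" "compact A"
    and "W \<in> components (sphere 0 1 - h ` A)" "h ` geom K \<inter> W = {}"
  obtains z where "z \<notin> planar ` A"
    "\<And>U. connected U \<Longrightarrow> U \<inter> planar ` A = {} \<Longrightarrow> z \<in> U \<Longrightarrow> Delta \<inter> U = {}"
proof -
  have "continuous_on (geom K) h" using emb by (simp add: sphere_embedding_def)
  then have "compact (h ` A)"
    by (rule compact_continuous_image[OF continuous_on_subset assms(2)]) (rule assms(1))
  then obtain w where w: "w \<in> W" "w \<noteq> P" using assms(3) by (rule sphere_component_other_point)
  have w_off: "w \<notin> h ` A" "w \<in> sphere 0 1 - {P}"
    using w in_components_subset[OF assms(3)] by blast+
  have "\<phi> w \<notin> planar ` A"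
  proof
    assume "\<phi> w \<in> planar ` A"
    then obtain x where x: "x \<in> A" "\<phi> w = planar x" by blast
    then have "w = h x"
      using chart_inverse_planar[of x] assms(1) homeomorphism_apply1[OF chart w_off(2)] by auto
    then show False using x(1) w_off(1) by blast
  qed
  moreover have "Delta \<inter> U = {}"
    if U: "connected U" "U \<inter> planar ` A = {}" "\<phi> w \<in> U" for U
  proof (rule ccontr)
    assume "Delta \<inter> U \<noteq> {}"
    then obtain x where x: "x \<in> geom K" "planar x \<in> U" unfolding Delta_def by blast
    then have "h x \<in> W"
      using component_lift_of_connected_set[OF assms(1,3) w U] chart_inverse_planar[OF x(1)]
      by (metis image_eqI subsetD)
    then show False using assms(4) x(1) by blast
  qed
  ultimately show ?thesis using that by blast
qed

lemma Delta_avoids_side_of_induced_square: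
  assumes "adj K a b" "adj K b c" "adj K c d" "adj K d a" "\<not> adj K a c" "\<not> adj K b d"
    and "distinct [a, b, c, d]"
  defines "J \<equiv> planar ` square_set a b c d"
  shows "Delta \<inter> inside J = {} \<or> Delta \<inter> outside J = {}"
proof -
  have sq: "square_set a b c d \<subseteq> geom K"
    using square_set_subset_geom[OF simplicial assms(1-4)] .
  have "\<not> (\<forall>C\<in>components (sphere 0 1 - h ` square_set a b c d). h ` geom K \<inter> C \<noteq> {})"
    using no_strong_sep[of "{a, b, c, d}"] induced_4cycleI[OF assms(1-7)]
    unfolding strongly_separates_def geom_full_sub_induced_square[OF simplicial assms(1-7)] by simp
  then obtain W where W: "W \<in> components (sphere 0 1 - h ` square_set a b c d)" "h ` geom K \<inter> W = {}"
    by blast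
  obtain z where z: "z \<notin> J" and avoid: "\<And>U. connected U \<Longrightarrow> U \<inter> J = {} \<Longrightarrow> z \<in> U \<Longrightarrow> Delta \<inter> U = {}"
    using planar_point_of_avoiding_component[OF sq compact_square_set[OF assms(7)] W]
    unfolding J_def by blast
  note Jordan = Jordan_planar_square(5,3,4)[OF assms(1-4,7), folded J_def]
  have "inside J \<inter> J = {}" "outside J \<inter> J = {}" using Jordan(1) by blast+
  moreover consider "z \<in> inside J" | "z \<in> outside J" using z Jordan(1) by blast
  ultimately show ?thesis using avoid Jordan(2,3) by metis
qed

lemma Delta_avoiding_component_of_induced_square:
  assumes "adj K a b" "adj K b c" "adj K c d" "adj K d a" "\<not> adj K a c" "\<not> adj K b d"
    and "distinct [a, b, c, d]"
  obtains B where "B \<in> components (- planar ` square_set a b c d)" "Delta \<inter> B = {}"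
    "planar ` square_set a b c d \<subseteq> closure B"
proof -
  let ?J = "planar ` square_set a b c d"
  note Jordan = Jordan_planar_square[OF assms(1-4,7)]
  have components: "inside ?J \<in> components (- ?J)" "outside ?J \<in> components (- ?J)"
    by (simp_all add: inside_in_components outside_in_components Jordan)
  have closures: "?J \<subseteq> closure (inside ?J)" "?J \<subseteq> closure (outside ?J)"
    by (simp_all add: closure_Un_frontier Jordan)
  from Delta_avoids_side_of_induced_square[OF assms]
  show ?thesis
  proof
    assume "Delta \<inter> inside ?J = {}"
    then show ?thesis using that components(1) closures(1) by blast
  next
    assume "Delta \<inter> outside ?J = {}"
    then show ?thesis using that components(2) closures(2) by blast
  qed
qed

lemma connected_component_vertices_off_triangle:
  assumes "{x, y, z} \<in> K" "distinct [x, y, z]"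
    and "u \<in> verts K" "v \<in> verts K" "u \<notin> {x, y, z}" "v \<notin> {x, y, z}"
  shows "connected_component (- planar ` closed_simplex {x, y, z})
           (planar (vertex_point u)) (planar (vertex_point v))"
proof -
  have sub: "closed_simplex {x, y, z} \<subseteq> geom K"
    using closed_simplex_subset_geom[OF simplicial assms(1)] .
  have "vertex_point u \<in> geom K" "vertex_point v \<in> geom K"
    using vertex_point_in_geom[OF simplicial] assms(3,4) by blast+
  then have "planar (vertex_point u) \<notin> planar ` closed_simplex {x, y, z}"
    "planar (vertex_point v) \<notin> planar ` closed_simplex {x, y, z}"
    using planar_notin_image[OF _ sub] assms(5,6) by simp_all
  then show ?thesis
    using connected_complement_planar_triangle[OF assms(1,2)] connected_iff_connected_component
    by blast
qed

lemma connected_component_Delta_off_induced_square: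
  assumes "adj K a b" "adj K b c" "adj K c d" "adj K d a" "\<not> adj K a c" "\<not> adj K b d"
    and "distinct [a, b, c, d]"
    and "x \<in> Delta" "y \<in> Delta" "x \<notin> planar ` square_set a b c d" "y \<notin> planar ` square_set a b c d"
  shows "connected_component (- planar ` square_set a b c d) x y"
proof -
  let ?J = "planar ` square_set a b c d"
  note Jordan = Jordan_planar_square(5,3,4)[OF assms(1-4,7)]
  from Delta_avoids_side_of_induced_square[OF assms(1-7)]
  consider "Delta \<inter> inside ?J = {}" | "Delta \<inter> outside ?J = {}" by blast
  then show ?thesis
  proof cases
    case 1
    then have "x \<in> outside ?J" "y \<in> outside ?J" using assms(8-11) Jordan(1) by blast+
    then have "connected_component (outside ?J) x y"
      using Jordan(3) connected_iff_connected_component by blast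
    then show ?thesis by (rule connected_component_of_subset) (use Jordan(1) in blast)
  next
    case 2
    then have "x \<in> inside ?J" "y \<in> inside ?J" using assms(8-11) Jordan(1) by blast+
    then have "connected_component (inside ?J) x y"
      using Jordan(2) connected_iff_connected_component by blast
    then show ?thesis by (rule connected_component_of_subset) (use Jordan(1) in blast)
  qed
qed

lemma connected_component_vertices_off_chorded_square:
  assumes "adj K a b" "adj K b c" "adj K c d" "adj K d a" "adj K b d" "distinct [a, b, c, d]"
    and "u \<in> verts K" "v \<in> verts K" "u \<notin> {a, b, c, d}" "v \<notin> {a, b, c, d}"
  shows "connected_component (- planar ` square_set a b c d)
           (planar (vertex_point u)) (planar (vertex_point v))"
proof -
  let ?T1 = "closed_simplex {a, b, d}" and ?T2 = "closed_simplex {c, b, d}"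
  have dist: "distinct [a, b, d]" "distinct [c, b, d]" using assms(6) by auto
  have "adj K a d" "adj K c b" using assms(2,4) adj_sym by metis+
  then have tri: "{a, b, d} \<in> K" "{c, b, d} \<in> K"
    using flag_complex_triangle[OF flag assms(1,5)] flag_complex_triangle[OF flag _ assms(5,3)] by auto
  have sub: "?T1 \<subseteq> geom K" "?T2 \<subseteq> geom K"
    using closed_simplex_subset_geom[OF simplicial] tri by blast+
  have "{a, b, d} \<inter> {c, b, d} = {b, d}" using assms(6) by auto
  then have "connected (?T1 \<inter> ?T2)" by (simp add: closed_simplex_Int connected_closed_simplex_edge)
  then have "connected_component (- planar ` (?T1 \<union> ?T2)) (planar (vertex_point u)) (planar (vertex_point v))"
    using planar_Janiszewski[OF sub compact_closed_simplex_triangle[OF dist(1)]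
        compact_closed_simplex_triangle[OF dist(2)]]
      connected_component_vertices_off_triangle[OF tri(1) dist(1) assms(7,8)]
      connected_component_vertices_off_triangle[OF tri(2) dist(2) assms(7,8)] assms(9,10)
    by simp
  moreover have "square_set a b c d \<subseteq> ?T1 \<union> ?T2"
    using closed_simplex_mono[of "{a, b, d}" "{a, b}"] closed_simplex_mono[of "{c, b, d}" "{b, c}"]
      closed_simplex_mono[of "{c, b, d}" "{c, d}"] closed_simplex_mono[of "{a, b, d}" "{d, a}"]
    unfolding square_set_def by auto
  then have "- planar ` (?T1 \<union> ?T2) \<subseteq> - planar ` square_set a b c d" by blast
  ultimately show ?thesis by (rule connected_component_of_subset)
qed

lemma connected_component_vertices_off_square:
  assumes "adj K a b" "adj K b c" "adj K c d" "adj K d a" "\<not> adj K a c" "distinct [a, b, c, d]"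
    and "u \<in> verts K" "v \<in> verts K" "u \<notin> {a, b, c, d}" "v \<notin> {a, b, c, d}"
  shows "connected_component (- planar ` square_set a b c d)
           (planar (vertex_point u)) (planar (vertex_point v))"
proof (cases "adj K b d")
  case False
  have sq: "square_set a b c d \<subseteq> geom K"
    using square_set_subset_geom[OF simplicial assms(1-4)] .
  have geom: "vertex_point u \<in> geom K" "vertex_point v \<in> geom K"
    using vertex_point_in_geom[OF simplicial] assms(7,8) by blast+
  show ?thesis
    using connected_component_Delta_off_induced_square[OF assms(1-5) False assms(6)]
      planar_vertex_in_Delta[OF assms(7)] planar_vertex_in_Delta[OF assms(8)]
      planar_notin_image[OF geom(1) sq] planar_notin_image[OF geom(2) sq] assms(9,10)
    by (simp add: vertex_point_in_square_set_iff)
next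
  case True
  then show ?thesis using connected_component_vertices_off_chorded_square assms by blast
qed

lemma connected_component_from_avoiding_set:
  assumes B: "connected B" "y \<in> B" "Delta \<inter> B = {}" "planar (vertex_point q) \<in> closure B"
    and "adj K a p" "adj K p c" "adj K c r" "adj K r a" "\<not> adj K a c" "distinct [a, p, c, r]"
    and "q \<in> verts K" "q \<notin> {a, p, c, r}" "f \<in> verts K" "f \<notin> {a, p, c, r}"
  shows "connected_component (- planar ` square_set a p c r) y (planar (vertex_point f))"
proof -
  let ?J = "planar ` square_set a p c r"
  have sq: "square_set a p c r \<subseteq> geom K"
    using square_set_subset_geom[OF simplicial assms(5-8)] .
  have q_off: "planar (vertex_point q) \<notin> ?J"
    using planar_notin_image[OF vertex_point_in_geom[OF simplicial assms(11)] sq] assms(12)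
    by (simp add: vertex_point_in_square_set_iff)
  have "?J \<subseteq> Delta" unfolding Delta_def using sq by (rule image_mono)
  then have "B \<subseteq> - ?J" using B(3) by auto
  then have "insert (planar (vertex_point q)) B \<subseteq> - ?J" using q_off by simp
  then have "connected_component (- ?J) y (planar (vertex_point q))"
    by (rule connected_component_closure_point[OF B(1,2,4)])
  moreover have "connected_component (- ?J) (planar (vertex_point q)) (planar (vertex_point f))"
    using connected_component_vertices_off_square[OF assms(5-10) assms(11,13,12,14)] .
  ultimately show ?thesis by (rule connected_component_trans)
qed

lemma connected_component_off_square_Janiszewski:
  assumes "adj K a p" "adj K p c" "adj K a q" "adj K q c" "adj K c r" "adj K r a"
    and "distinct [a, p, q, c, r]"
    and "connected_component (- planar ` square_set a p c r) y z"
      "connected_component (- planar ` square_set a q c r) y z"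
  shows "connected_component (- planar ` square_set a p c q) y z"
proof -
  have dist: "distinct [a, p, c, r]" "distinct [a, q, c, r]" using assms(7) by auto
  have sqs: "square_set a p c r \<subseteq> geom K" "square_set a q c r \<subseteq> geom K"
    using square_set_subset_geom[OF simplicial assms(1,2,5,6)]
      square_set_subset_geom[OF simplicial assms(3,4,5,6)] .
  have "vertex_point r \<in> closed_simplex {c, r} \<inter> closed_simplex {r, a}" by simp
  then have "closed_simplex {c, r} \<inter> closed_simplex {r, a} \<noteq> {}" by blast
  then have "connected (square_set a p c r \<inter> square_set a q c r)"
    unfolding square_set_Int_square_set[OF assms(7)]
    by (rule connected_Un[OF connected_closed_simplex_edge connected_closed_simplex_edge])
  then have "connected_component (- planar ` (square_set a p c r \<union> square_set a q c r)) y z"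
    by (rule planar_Janiszewski[OF sqs compact_square_set[OF dist(1)] compact_square_set[OF dist(2)]
          _ assms(8,9)])
  moreover have "- planar ` (square_set a p c r \<union> square_set a q c r) \<subseteq> - planar ` square_set a p c q"
    using square_set_subset_Un[of a p c q r] by blast
  ultimately show ?thesis by (rule connected_component_of_subset)
qed

lemma verts_subset_of_three_common_neighbours:
  assumes "\<not> adj K a c" "adj K a p" "adj K p c" "adj K a q" "adj K q c" "adj K a r" "adj K r c"
    and "\<not> adj K p q" "distinct [a, c, p, q, r]"
  shows "verts K \<subseteq> {a, c, p, q, r}"
proof
  fix f assume f: "f \<in> verts K"
  show "f \<in> {a, c, p, q, r}"
  proof (rule ccontr)
    assume f_off: "f \<notin> {a, c, p, q, r}"
    have sym: "adj K c q" "adj K q a" "adj K c r" "adj K r a" using assms(4-7) adj_sym by metis+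
    have dist: "distinct [a, p, c, q]" "distinct [a, p, c, r]" "distinct [a, q, c, r]"
      "distinct [a, p, q, c, r]" using assms(9) by auto
    let ?J = "planar ` square_set a p c q"
    obtain B where B: "B \<in> components (- ?J)" "Delta \<inter> B = {}" "?J \<subseteq> closure B"
      using Delta_avoiding_component_of_induced_square[OF assms(2,3) sym(1,2) assms(1,8) dist(1)] .
    obtain y where y: "y \<in> B" using in_components_nonempty[OF B(1)] by blast
    have "connected B" using in_components_connected[OF B(1)] .
    have closure: "planar (vertex_point p) \<in> closure B" "planar (vertex_point q) \<in> closure B"
      using B(3) by (auto simp: vertex_point_in_square_set_iff)
    have verts: "p \<in> verts K" "q \<in> verts K"
      using adj_imp_verts[OF assms(2)] adj_imp_verts[OF assms(4)] by simp_all
    have off: "q \<notin> {a, p, c, r}" "p \<notin> {a, q, c, r}" "f \<notin> {a, p, c, r}" "f \<notin> {a, q, c, r}"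
      using dist(4) f_off by auto
    have "connected_component (- ?J) y (planar (vertex_point f))"
    proof (rule connected_component_off_square_Janiszewski[OF assms(2-5) sym(3,4) dist(4)])
      show "connected_component (- planar ` square_set a p c r) y (planar (vertex_point f))"
        using connected_component_from_avoiding_set[OF \<open>connected B\<close> y B(2) closure(2)
            assms(2,3) sym(3,4) assms(1) dist(2) verts(2) off(1) f off(3)] .
      show "connected_component (- planar ` square_set a q c r) y (planar (vertex_point f))"
        using connected_component_from_avoiding_set[OF \<open>connected B\<close> y B(2) closure(1)
            assms(4,5) sym(3,4) assms(1) dist(3) verts(1) off(2) f off(4)] .
    qed
    then have "planar (vertex_point f) \<in> B"
      using component_eq_connected_component_set[OF B(1) y] by simp
    then show False using B(2) planar_vertex_in_Delta[OF f] by blast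
  qed
qed

end

lemma plane_chart_exists:
  assumes "flag_complex K" "sphere_embedding K h" "\<And>S. \<not> strongly_separates K h S"
    and "induced_4cycle K S"
  obtains P \<phi> \<psi> where "plane_chart K h P \<phi> \<psi>"
proof -
  obtain C where C: "C \<in> components (sphere 0 1 - h ` geom (full_sub K S))" "h ` geom K \<inter> C = {}"
    using assms(3)[of S] assms(4) unfolding strongly_separates_def by blast
  obtain P where "P \<in> C" using in_components_nonempty[OF C(1)] by blast
  then have P: "P \<in> sphere 0 1" "P \<notin> h ` geom K" using C in_components_subset[OF C(1)] by blast+
  have "sphere (0::real^3) 1 - {P} homeomorphic {x::real^3. axis 3 1 \<bullet> x = 0}"
    by (rule homeomorphic_punctured_sphere_hyperplane) (use P in auto)
  moreover have "{x::real^3. axis 3 1 \<bullet> x = 0} homeomorphic (UNIV::complex set)"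
    by (subst homeomorphic_affine_sets_eq) (auto simp: affine_hyperplane)
  ultimately have "sphere (0::real^3) 1 - {P} homeomorphic (UNIV::complex set)"
    by (rule homeomorphic_trans)
  then obtain \<phi> \<psi> where "homeomorphism (sphere 0 1 - {P}) (UNIV::complex set) \<phi> \<psi>"
    unfolding homeomorphic_def by blast
  then show ?thesis
    using assms(1-3) P by (intro that[of P \<phi> \<psi>]) (unfold_locales)
qed

lemma (in plane_chart) special_if_induced_4cycles_share_nonadjacent_pair:
  assumes "induced_4cycle K S1" "induced_4cycle K S2" "S1 \<noteq> S2"
    and "u \<in> S1 \<inter> S2" "w \<in> S1 \<inter> S2" "u \<noteq> w" "\<not> adj K u w"
  shows "special_complex K"
proof -
  obtain b d where S1: "S1 = {u, b, w, d}" "distinct [u, b, w, d]"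
    "adj K u b" "adj K b w" "adj K u d" "adj K d w" "\<not> adj K b d"
    using induced_4cycle_opposite[OF assms(1)] assms(4-7) by blast
  obtain x y where S2: "S2 = {u, x, w, y}" "distinct [u, x, w, y]"
    "adj K u x" "adj K x w" "adj K u y" "adj K y w"
    using induced_4cycle_opposite[OF assms(2)] assms(4-7) by blast
  have "\<exists>r\<in>{x, y}. r \<notin> {b, d}"
  proof (rule ccontr)
    assume "\<not> (\<exists>r\<in>{x, y}. r \<notin> {b, d})"
    then have "{x, y} = {b, d}" using S2(2) by auto
    then have "S1 = S2" using S1(1) S2(1) by auto
    then show False using assms(3) by simp
  qed
  then obtain r where r: "adj K u r" "adj K r w" "r \<notin> {b, d}" using S2(3-6) by blast
  then have "r \<noteq> u" "r \<noteq> w" by (auto simp: adj_def)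
  then have dist: "distinct [u, w, b, d, r]" using S1(2) r(3) by auto
  have "verts K \<subseteq> {u, w, b, d, r}"
    using verts_subset_of_three_common_neighbours[OF assms(7) S1(3,4,5,6) r(1,2) S1(7) dist] .
  moreover have "{u, w, b, d, r} \<subseteq> verts K"
    using adj_imp_verts[OF S1(3)] adj_imp_verts[OF S1(5)] adj_imp_verts[OF S1(4)] adj_imp_verts[OF r(1)]
    by auto
  ultimately have verts: "verts K = {b, d, r} \<union> {u, w}" by auto
  have "adj K w b" "adj K w d" "adj K w r" using S1(4,6) r(2) adj_sym by metis+
  moreover have "card {b, d, r} = 3" using dist by simp
  moreover have "\<not> (\<forall>x\<in>{b, d, r}. \<forall>y\<in>{b, d, r}. x \<noteq> y \<longrightarrow> adj K x y)"
    using S1(7) dist by auto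
  ultimately show ?thesis
    unfolding special_complex_def using verts S1(3,5) r(1) dist assms(7)
    by (intro exI[of _ u] exI[of _ w] exI[of _ "{b, d, r}"]) simp
qed

lemma induced_4cycle_clique_cases:
  assumes "induced_4cycle K S" "X \<subseteq> S" "X \<noteq> {}"
    and clique: "\<And>u w. u \<in> X \<Longrightarrow> w \<in> X \<Longrightarrow> u \<noteq> w \<Longrightarrow> adj K u w"
  obtains v where "X = {v}" | u w where "X = {u, w}" "adj K u w"
proof -
  obtain v where v: "v \<in> X" using assms(3) by blast
  show ?thesis
  proof (cases "X = {v}")
    case False
    then obtain w where w: "w \<in> X" "w \<noteq> v" using v by blast
    have "X = {v, w}"
    proof (rule ccontr)
      assume "X \<noteq> {v, w}"
      then obtain z where "z \<in> X" "z \<noteq> v" "z \<noteq> w" using v w by blast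
      then show False
        using induced_4cycle_no_triangle[OF assms(1), of v w z] assms(2) v w clique by auto
    qed
    then show ?thesis using that(2) clique v w by blast
  qed (use that(1) in blast)
qed

theorem lemma4p10:
  fixes K :: "'v set set" and h :: "('v \<Rightarrow> real) \<Rightarrow> real^3"
  assumes "flag_complex K" and "sphere_embedding K h"
    and "prime_complex K h" and "\<not> special_complex K"
    and "induced_4cycle K S1" and "induced_4cycle K S2" and "S1 \<noteq> S2"
    and "full_sub K S1 \<inter> full_sub K S2 \<noteq> {}"
  shows "(\<exists>v. full_sub K S1 \<inter> full_sub K S2 = {{v}}) \<or>
         (\<exists>u w. adj K u w \<and> full_sub K S1 \<inter> full_sub K S2 = {{u}, {w}, {u, w}})"
proof -
  have sc: "simplicial_complex K" using assms(1) unfolding flag_complex_def by simp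
  have no_strong_sep: "\<And>S. \<not> strongly_separates K h S"
    using assms(3) unfolding prime_complex_def by simp
  obtain P \<phi> \<psi> where chart: "plane_chart K h P \<phi> \<psi>"
    using plane_chart_exists[OF assms(1,2) no_strong_sep assms(5)] .
  have Int: "full_sub K S1 \<inter> full_sub K S2 = full_sub K (S1 \<inter> S2)"
    unfolding full_sub_def by blast
  obtain s where s: "s \<in> K" "s \<subseteq> S1 \<inter> S2" using assms(8) unfolding Int full_sub_def by blast
  then have nonempty: "S1 \<inter> S2 \<noteq> {}" using sc unfolding simplicial_complex_def by blast
  have clique: "adj K u w" if "u \<in> S1 \<inter> S2" "w \<in> S1 \<inter> S2" "u \<noteq> w" for u w
    using plane_chart.special_if_induced_4cycles_share_nonadjacent_pair[OF chart assms(5-7) that]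
      assms(4) by blast
  show ?thesis
  proof (rule induced_4cycle_clique_cases[OF assms(5) Int_lower1 nonempty clique])
    fix v assume v: "S1 \<inter> S2 = {v}"
    then have "v \<in> verts K" using assms(5) unfolding induced_4cycle_def by blast
    then show ?thesis using full_sub_singleton[OF sc] v Int by simp
  next
    fix u w assume "S1 \<inter> S2 = {u, w}" "adj K u w"
    then show ?thesis using full_sub_edge[OF sc] Int by auto
  qed
qed

end
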